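(* Let $G$ be a finite permutation group acting quasi-transitively on a finite set $\Omega$, with $G$-orbits $\Delta_1,\dots,\Delta_r$ where $r>1$. Then for each $i$, $G$ acts on $\Delta_i$ as a primitive $\frac{3}{2}$-transitive permutation group.
   Context: A finite permutation group $G$ on a finite set $\Omega$ is called quasi-transitive if there is a natural number $t>1$ such that $|G_{\alpha\beta}|=t$ for all two-element subsets $\{\alpha,\beta\}\subseteq\Omega$, where $G_{\alpha\beta}$ denotes the pointwise stabiliser of $\alpha$ and $\beta$ in $G$. A group acting on a set $\Delta$ is $\frac{3}{2}$-transitive if it is transitive on $\Delta$ and, for $\alpha\in\Delta$, all orbits of the point stabiliser $G_\alpha$ on $\Delta\setminus\{\alpha\}$ have the same size. *)

theory Defs
  imports "HOL-Combinatorics.Permutations"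
begin

definition perm_group :: "('a \<Rightarrow> 'a) set \<Rightarrow> 'a set \<Rightarrow> bool" where
  "perm_group G \<Omega> \<longleftrightarrow> finite \<Omega> \<and> finite G \<and> id \<in> G \<and> (\<forall>g\<in>G. g permutes \<Omega>)
     \<and> (\<forall>g\<in>G. \<forall>h\<in>G. g \<circ> h \<in> G) \<and> (\<forall>g\<in>G. inv g \<in> G)"

definition orbit :: "('a \<Rightarrow> 'a) set \<Rightarrow> 'a \<Rightarrow> 'a set" where
  "orbit G a = (\<lambda>g. g a) ` G"

definition orbits :: "('a \<Rightarrow> 'a) set \<Rightarrow> 'a set \<Rightarrow> 'a set set" where
  "orbits G \<Omega> = orbit G ` \<Omega>"

definition stabiliser :: "('a \<Rightarrow> 'a) set \<Rightarrow> 'a \<Rightarrow> ('a \<Rightarrow> 'a) set" where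
  "stabiliser G a = {g \<in> G. g a = a}"

definition stabiliser2 :: "('a \<Rightarrow> 'a) set \<Rightarrow> 'a \<Rightarrow> 'a \<Rightarrow> ('a \<Rightarrow> 'a) set" where
  "stabiliser2 G a b = {g \<in> G. g a = a \<and> g b = b}"

definition quasi_transitive :: "('a \<Rightarrow> 'a) set \<Rightarrow> 'a set \<Rightarrow> bool" where
  "quasi_transitive G \<Omega> \<longleftrightarrow> perm_group G \<Omega> \<and>
     (\<exists>t::nat. t > 1 \<and> (\<forall>a\<in>\<Omega>. \<forall>b\<in>\<Omega>. a \<noteq> b \<longrightarrow> card (stabiliser2 G a b) = t))"

definition transitive_on :: "('a \<Rightarrow> 'a) set \<Rightarrow> 'a set \<Rightarrow> bool" where
  "transitive_on G \<Delta> \<longleftrightarrow> \<Delta> \<noteq> {} \<and> (\<forall>g\<in>G. g ` \<Delta> \<subseteq> \<Delta>)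
     \<and> (\<forall>a\<in>\<Delta>. \<forall>b\<in>\<Delta>. \<exists>g\<in>G. g a = b)"

definition three_halves_transitive_on :: "('a \<Rightarrow> 'a) set \<Rightarrow> 'a set \<Rightarrow> bool" where
  "three_halves_transitive_on G \<Delta> \<longleftrightarrow> transitive_on G \<Delta> \<and>
     (\<forall>a\<in>\<Delta>. \<forall>b\<in>\<Delta> - {a}. \<forall>c\<in>\<Delta> - {a}.
        card (orbit (stabiliser G a) b) = card (orbit (stabiliser G a) c))"

definition is_block :: "('a \<Rightarrow> 'a) set \<Rightarrow> 'a set \<Rightarrow> 'a set \<Rightarrow> bool" where
  "is_block G \<Delta> B \<longleftrightarrow> B \<subseteq> \<Delta> \<and> (\<forall>g\<in>G. g ` B = B \<or> g ` B \<inter> B = {})"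

definition primitive_on :: "('a \<Rightarrow> 'a) set \<Rightarrow> 'a set \<Rightarrow> bool" where
  "primitive_on G \<Delta> \<longleftrightarrow> transitive_on G \<Delta> \<and>
     (\<forall>B. is_block G \<Delta> B \<longrightarrow> card B \<le> 1 \<or> B = \<Delta>)"

end

theory Submission
  imports Defs
begin

text \<open>
  Let t be the common order of the two-point stabilisers. By orbit-stabiliser,
  |G_a| = |orbit of b under G_a| * t for every b \<noteq> a, so all suborbits of G_a have the
  same length: this is 3/2-transitivity.

  For primitivity, let B be a block of an orbit \<Delta> with 1 < |B| and B \<noteq> \<Delta>, and pick \<alpha> \<in> B
  and \<gamma> \<in> \<Delta> - B. The stabiliser of B in G_\<gamma> has the point stabilisers G_{x,\<gamma>} (x \<in> B),
  so all its orbits on B have one length w, and w divides |B|; w also divides the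
  suborbit length, which divides |B| - 1. Hence w = 1, and it follows that every
  two-point stabiliser of points of \<Delta> is the kernel K of the action on \<Delta>. As t > 1, some
  k \<in> K moves a point b. Normality of K puts the G_b-orbit of k b inside b^K - {b}, so
  |G_b| \<le> (|b^K| - 1) t; on the other hand the sets G_{u,b} - K_b (u \<in> \<Delta>) are disjoint,
  so |G_b| \<ge> |K_b| + |\<Delta>| (t - |K_b|). Since t = |b^K| |K_b| and |b^K| \<le> |\<Delta>|, these
  bounds are incompatible.
\<close>

lemma perm_group_permutes: "perm_group G \<Omega> \<Longrightarrow> g \<in> G \<Longrightarrow> g permutes \<Omega>"
  by (simp add: perm_group_def)

lemma perm_group_finite: "perm_group G \<Omega> \<Longrightarrow> finite G"
  by (simp add: perm_group_def)

lemma perm_group_comp: "perm_group G \<Omega> \<Longrightarrow> g \<in> G \<Longrightarrow> h \<in> G \<Longrightarrow> g \<circ> h \<in> G"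
  by (simp add: perm_group_def)

lemma perm_group_inv: "perm_group G \<Omega> \<Longrightarrow> g \<in> G \<Longrightarrow> inv g \<in> G"
  by (simp add: perm_group_def)

lemma perm_group_inj: "perm_group G \<Omega> \<Longrightarrow> g \<in> G \<Longrightarrow> inj g"
  by (rule permutes_inj[OF perm_group_permutes])

lemma perm_group_inv_apply: "perm_group G \<Omega> \<Longrightarrow> g \<in> G \<Longrightarrow> inv g (g x) = x"
  by (rule permutes_inverses(2)[OF perm_group_permutes])

lemma perm_group_apply_inv: "perm_group G \<Omega> \<Longrightarrow> g \<in> G \<Longrightarrow> g (inv g x) = x"
  by (rule permutes_inverses(1)[OF perm_group_permutes])

lemma perm_group_subgroup:
  assumes "perm_group G \<Omega>" "H \<subseteq> G" "id \<in> H"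
    and "\<And>g h. g \<in> H \<Longrightarrow> h \<in> H \<Longrightarrow> g \<circ> h \<in> H" "\<And>g. g \<in> H \<Longrightarrow> inv g \<in> H"
  shows "perm_group H \<Omega>"
  using assms finite_subset unfolding perm_group_def by blast

lemma perm_group_stabiliser:
  assumes "perm_group G \<Omega>"
  shows "perm_group (stabiliser G a) \<Omega>"
proof (rule perm_group_subgroup[OF assms])
  show "inv g \<in> stabiliser G a" if "g \<in> stabiliser G a" for g
    using that perm_group_inv[OF assms] perm_group_inv_apply[OF assms, of g a]
    by (auto simp: stabiliser_def)
qed (use assms in \<open>auto simp: stabiliser_def perm_group_def\<close>)

lemma perm_group_setwise_stabiliser:
  assumes "perm_group G \<Omega>"
  shows "perm_group {g \<in> G. g ` B = B} \<Omega>"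
proof (rule perm_group_subgroup[OF assms])
  show "inv g \<in> {g \<in> G. g ` B = B}" if "g \<in> {g \<in> G. g ` B = B}" for g
  proof -
    have g: "g \<in> G" "g ` B = B" using that by auto
    have "inv g ` B = inv g ` g ` B" using g(2) by simp
    also have "\<dots> = B" using perm_group_inv_apply[OF assms g(1)] by (simp add: image_image)
    finally show ?thesis using g perm_group_inv[OF assms] by simp
  qed
next
  show "g \<circ> h \<in> {g \<in> G. g ` B = B}"
    if "g \<in> {g \<in> G. g ` B = B}" "h \<in> {g \<in> G. g ` B = B}" for g h
    using that perm_group_comp[OF assms] by (simp only: image_comp[symmetric] mem_Collect_eq)
qed (use assms in \<open>auto simp: perm_group_def\<close>)

lemma stabiliser_stabiliser: "stabiliser (stabiliser G a) b = stabiliser2 G a b"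
  unfolding stabiliser_def stabiliser2_def by auto

lemma perm_group_stabiliser2: "perm_group G \<Omega> \<Longrightarrow> perm_group (stabiliser2 G a b) \<Omega>"
  unfolding stabiliser_stabiliser[symmetric] by (intro perm_group_stabiliser)

text \<open>Orbit-stabiliser for an arbitrary action \<open>g \<mapsto> f g\<close>: the hypothesis says that the fibres
  of \<open>f\<close> are the left cosets of \<open>{g \<in> G. f g = f id}\<close>.\<close>

lemma card_perm_group_eq_card_image_mult:
  assumes G: "perm_group G \<Omega>"
    and coset: "\<And>g h. g \<in> G \<Longrightarrow> h \<in> G \<Longrightarrow> f (g \<circ> h) = f g \<longleftrightarrow> f h = f id"
  shows "card G = card (f ` G) * card {g \<in> G. f g = f id}"
proof -
  let ?S = "{g \<in> G. f g = f id}"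
  have fibre: "{g \<in> G. f g = f h} = (\<circ>) h ` ?S" if h: "h \<in> G" for h
  proof (intro equalityI subsetI)
    fix g assume g: "g \<in> {g \<in> G. f g = f h}"
    have cancel: "h \<circ> (inv h \<circ> g) = g"
      using perm_group_apply_inv[OF G h] by (simp add: fun_eq_iff)
    have inv_g: "inv h \<circ> g \<in> G"
      using g perm_group_comp[OF G] perm_group_inv[OF G h] by blast
    then have "f (inv h \<circ> g) = f id"
      using coset[OF h inv_g] cancel g by simp
    then show "g \<in> (\<circ>) h ` ?S"
      using inv_g cancel by (intro image_eqI[of _ _ "inv h \<circ> g"]) auto
  next
    fix g assume "g \<in> (\<circ>) h ` ?S"
    then obtain s where s: "s \<in> G" "f s = f id" and "g = h \<circ> s" by blast
    then show "g \<in> {g \<in> G. f g = f h}"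
      using coset[OF h s(1)] perm_group_comp[OF G h s(1)] by simp
  qed
  have card_coset: "card ((\<circ>) h ` ?S) = card ?S" if h: "h \<in> G" for h
  proof (rule card_image, rule inj_onI)
    fix a b :: "'a \<Rightarrow> 'a" assume "h \<circ> a = h \<circ> b"
    then have "inv h \<circ> (h \<circ> a) = inv h \<circ> (h \<circ> b)" by simp
    then show "a = b" using perm_group_inv_apply[OF G h] by (simp add: comp_def)
  qed
  have card_fibre: "card {g \<in> G. f g = y} = card ?S" if y: "y \<in> f ` G" for y
  proof -
    obtain h where "h \<in> G" "y = f h" using y by blast
    then show ?thesis using fibre card_coset by simp
  qed
  have "card G = card (\<Union>y \<in> f ` G. {g \<in> G. f g = y})"
    by (rule arg_cong[of _ _ card]) auto
  also have "\<dots> = (\<Sum>y \<in> f ` G. card {g \<in> G. f g = y})"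
    by (rule card_UN_disjoint) (use perm_group_finite[OF G] in auto)
  also have "\<dots> = (\<Sum>y \<in> f ` G. card ?S)"
    using card_fibre by (rule sum.cong[OF refl])
  finally show ?thesis by simp
qed

lemma orbit_stabiliser:
  assumes "perm_group G \<Omega>"
  shows "card G = card (orbit G x) * card (stabiliser G x)"
proof -
  have "(g \<circ> h) x = g x \<longleftrightarrow> h x = id x" if "g \<in> G" for g h
    using perm_group_inj[OF assms that] by (simp add: inj_eq)
  then show ?thesis
    using card_perm_group_eq_card_image_mult[OF assms, of "\<lambda>g. g x"]
    unfolding orbit_def stabiliser_def by simp
qed

lemma card_setwise_stabiliser_dvd:
  assumes "perm_group G \<Omega>"
  shows "card {g \<in> G. g ` B = B} dvd card G"
proof -
  have "(g \<circ> h) ` B = g ` B \<longleftrightarrow> h ` B = id ` B" if "g \<in> G" for g h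
    using inj_image_eq_iff[OF perm_group_inj[OF assms that]]
    by (simp only: image_comp[symmetric] image_id id_apply)
  then show ?thesis
    using card_perm_group_eq_card_image_mult[OF assms, of "\<lambda>g. g ` B"] by simp
qed

lemma mem_orbit_self:
  assumes "perm_group G \<Omega>"
  shows "x \<in> orbit G x"
proof -
  have "id \<in> G" using assms by (simp add: perm_group_def)
  then show ?thesis unfolding orbit_def by (rule rev_image_eqI) simp
qed

lemma orbit_subset:
  assumes "\<And>g y. g \<in> G \<Longrightarrow> y \<in> Y \<Longrightarrow> g y \<in> Y" "x \<in> Y"
  shows "orbit G x \<subseteq> Y"
  using assms unfolding orbit_def by auto

lemma orbit_eq_if_mem:
  assumes G: "perm_group G \<Omega>" and y: "y \<in> orbit G x"
  shows "orbit G y = orbit G x"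
proof
  obtain h where h: "h \<in> G" "y = h x" using y by (auto simp: orbit_def)
  show "orbit G y \<subseteq> orbit G x"
  proof
    fix z assume "z \<in> orbit G y"
    then obtain g where g: "g \<in> G" "z = g y" by (auto simp: orbit_def)
    show "z \<in> orbit G x" unfolding orbit_def
      by (rule rev_image_eqI[OF perm_group_comp[OF G g(1) h(1)]]) (simp add: g(2) h(2))
  qed
  show "orbit G x \<subseteq> orbit G y"
  proof
    fix z assume "z \<in> orbit G x"
    then obtain g where g: "g \<in> G" "z = g x" by (auto simp: orbit_def)
    have "inv h \<in> G" using perm_group_inv[OF G h(1)] .
    then show "z \<in> orbit G y" unfolding orbit_def
      by (rule rev_image_eqI[OF perm_group_comp[OF G g(1)]])
        (simp add: g(2) h(2) perm_group_inv_apply[OF G h(1)])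
  qed
qed

lemma dvd_card_if_card_orbits_eq:
  assumes G: "perm_group G \<Omega>" and Y: "finite Y"
    and closed: "\<And>g y. g \<in> G \<Longrightarrow> y \<in> Y \<Longrightarrow> g y \<in> Y"
    and m: "\<And>y. y \<in> Y \<Longrightarrow> card (orbit G y) = m"
  shows "m dvd card Y"
proof -
  have Y_eq: "\<Union>(orbit G ` Y) = Y"
  proof
    show "\<Union>(orbit G ` Y) \<subseteq> Y" using closed by (auto simp: orbit_def)
    show "Y \<subseteq> \<Union>(orbit G ` Y)" using mem_orbit_self[OF G] by blast
  qed
  have "m * card (orbit G ` Y) = card (\<Union>(orbit G ` Y))"
  proof (rule card_partition)
    show "finite (orbit G ` Y)" using Y by (rule finite_imageI)
    show "finite (\<Union>(orbit G ` Y))" using Y Y_eq by simp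
    show "card c = m" if "c \<in> orbit G ` Y" for c using that m by blast
    show "c1 \<inter> c2 = {}" if "c1 \<in> orbit G ` Y" "c2 \<in> orbit G ` Y" "c1 \<noteq> c2" for c1 c2
      using that orbit_eq_if_mem[OF G] by blast
  qed
  then have "card Y = m * card (orbit G ` Y)" using Y_eq by simp
  then show ?thesis by (rule dvdI)
qed

lemma orbits_subset:
  assumes G: "perm_group G \<Omega>" and "\<Delta> \<in> orbits G \<Omega>"
  shows "\<Delta> \<subseteq> \<Omega>"
proof
  fix y assume "y \<in> \<Delta>"
  then obtain x g where "x \<in> \<Omega>" "g \<in> G" "y = g x"
    using assms(2) by (auto simp: orbits_def orbit_def)
  then show "y \<in> \<Omega>" using permutes_in_image[OF perm_group_permutes[OF G]] by simp
qed

lemma orbits_closed: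
  assumes G: "perm_group G \<Omega>" and "\<Delta> \<in> orbits G \<Omega>" "g \<in> G" "y \<in> \<Delta>"
  shows "g y \<in> \<Delta>"
proof -
  obtain x h where \<Delta>: "\<Delta> = orbit G x" and h: "h \<in> G" "y = h x"
    using assms(2,4) by (auto simp: orbits_def orbit_def)
  show ?thesis unfolding \<Delta> orbit_def
    by (rule rev_image_eqI[OF perm_group_comp[OF G \<open>g \<in> G\<close> h(1)]]) (simp add: h(2))
qed

lemma orbit_eq_if_mem_orbits:
  assumes G: "perm_group G \<Omega>" and "\<Delta> \<in> orbits G \<Omega>" "x \<in> \<Delta>"
  shows "orbit G x = \<Delta>"
proof -
  obtain a where "\<Delta> = orbit G a" using assms(2) by (auto simp: orbits_def)
  then show ?thesis using orbit_eq_if_mem[OF G] assms(3) by simp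
qed

lemma transitive_on_orbits:
  assumes G: "perm_group G \<Omega>" and \<Delta>: "\<Delta> \<in> orbits G \<Omega>"
  shows "transitive_on G \<Delta>"
  unfolding transitive_on_def
proof (intro conjI ballI)
  obtain a where "\<Delta> = orbit G a" using \<Delta> by (auto simp: orbits_def)
  then show "\<Delta> \<noteq> {}" using mem_orbit_self[OF G, of a] by auto
  show "g ` \<Delta> \<subseteq> \<Delta>" if "g \<in> G" for g using orbits_closed[OF G \<Delta> that] by blast
  show "\<exists>g\<in>G. g x = y" if "x \<in> \<Delta>" "y \<in> \<Delta>" for x y
  proof -
    have "y \<in> orbit G x" using orbit_eq_if_mem_orbits[OF G \<Delta> that(1)] that(2) by simp
    then show ?thesis by (auto simp: orbit_def)
  qed
qed

lemma card_stabiliser_eq_if_mem_orbits: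
  assumes G: "perm_group G \<Omega>" and \<Delta>: "\<Delta> \<in> orbits G \<Omega>" and "x \<in> \<Delta>" "y \<in> \<Delta>"
  shows "card (stabiliser G x) = card (stabiliser G y)"
proof -
  have "finite \<Delta>"
    using finite_subset[OF orbits_subset[OF G \<Delta>]] G by (simp add: perm_group_def)
  then have "card \<Delta> > 0" using assms(3) by (auto simp: card_gt_0_iff)
  moreover have "card G = card \<Delta> * card (stabiliser G x)"
    and "card G = card \<Delta> * card (stabiliser G y)"
    using orbit_stabiliser[OF G] orbit_eq_if_mem_orbits[OF G \<Delta>] assms(3,4) by metis+
  ultimately show ?thesis by simp
qed

lemma block_image_eq: "is_block G \<Delta> B \<Longrightarrow> g \<in> G \<Longrightarrow> x \<in> B \<Longrightarrow> g x \<in> B \<Longrightarrow> g ` B = B"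
  unfolding is_block_def by blast

locale uniform_two_point_stabilisers =
  fixes G :: "('a \<Rightarrow> 'a) set" and \<Omega> :: "'a set" and t :: nat
  assumes perm_group: "perm_group G \<Omega>"
    and card_stabiliser2: "a \<in> \<Omega> \<Longrightarrow> b \<in> \<Omega> \<Longrightarrow> a \<noteq> b \<Longrightarrow> card (stabiliser2 G a b) = t"
begin

lemma t_pos:
  assumes "a \<in> \<Omega>" "b \<in> \<Omega>" "a \<noteq> b"
  shows "t > 0"
proof -
  have "id \<in> stabiliser2 G a b" using perm_group by (simp add: perm_group_def stabiliser2_def)
  moreover have "finite (stabiliser2 G a b)"
    by (rule perm_group_finite[OF perm_group_stabiliser2[OF perm_group]])
  ultimately have "card (stabiliser2 G a b) > 0" by (auto simp: card_gt_0_iff)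
  then show ?thesis using card_stabiliser2[OF assms] by simp
qed

lemma card_stabiliser_eq_card_suborbit_mult:
  assumes "a \<in> \<Omega>" "b \<in> \<Omega>" "a \<noteq> b"
  shows "card (stabiliser G a) = card (orbit (stabiliser G a) b) * t"
  using orbit_stabiliser[OF perm_group_stabiliser[OF perm_group], of a b]
  by (simp add: stabiliser_stabiliser card_stabiliser2[OF assms])

lemma card_suborbits_eq:
  assumes "a \<in> \<Omega>" "b \<in> \<Omega> - {a}" "c \<in> \<Omega> - {a}"
  shows "card (orbit (stabiliser G a) b) = card (orbit (stabiliser G a) c)"
proof -
  have "card (orbit (stabiliser G a) b) * t = card (orbit (stabiliser G a) c) * t"
    using card_stabiliser_eq_card_suborbit_mult[of a b]
      card_stabiliser_eq_card_suborbit_mult[of a c] assms by auto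
  moreover have "t > 0" using t_pos[of a b] assms by auto
  ultimately show ?thesis by simp
qed

lemma three_halves_transitive_on_orbits:
  assumes "\<Delta> \<in> orbits G \<Omega>"
  shows "three_halves_transitive_on G \<Delta>"
  unfolding three_halves_transitive_on_def
proof (intro conjI ballI)
  show "transitive_on G \<Delta>" by (rule transitive_on_orbits[OF perm_group assms])
  show "card (orbit (stabiliser G a) b) = card (orbit (stabiliser G a) c)"
    if "a \<in> \<Delta>" "b \<in> \<Delta> - {a}" "c \<in> \<Delta> - {a}" for a b c
    using card_suborbits_eq that orbits_subset[OF perm_group assms] by blast
qed

context
  fixes \<Delta> B
  assumes \<Delta>: "\<Delta> \<in> orbits G \<Omega>" and block: "is_block G \<Delta> B"
begin

lemma block_subset: "B \<subseteq> \<Omega>"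
  using block orbits_subset[OF perm_group \<Delta>] by (auto simp: is_block_def)

lemma finite_block: "finite B"
  using finite_subset[OF block_subset] perm_group by (simp add: perm_group_def)

lemma card_suborbit_dvd_card_block:
  assumes \<alpha>: "\<alpha> \<in> B" and \<gamma>: "\<gamma> \<in> \<Omega> - {\<alpha>}"
  shows "card (orbit (stabiliser G \<alpha>) \<gamma>) dvd card B - 1"
proof -
  have closed: "g y \<in> B - {\<alpha>}" if "g \<in> stabiliser G \<alpha>" "y \<in> B - {\<alpha>}" for g y
  proof -
    have g: "g \<in> G" "g \<alpha> = \<alpha>" using that(1) by (auto simp: stabiliser_def)
    then have "g ` B = B" using block_image_eq[OF block g(1) \<alpha>] \<alpha> by simp
    moreover have "g y \<noteq> g \<alpha>"
      using that(2) inj_eq[OF perm_group_inj[OF perm_group g(1)]] by simp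
    ultimately show ?thesis using that(2) g(2) by auto
  qed
  have "card (orbit (stabiliser G \<alpha>) y) = card (orbit (stabiliser G \<alpha>) \<gamma>)" if "y \<in> B - {\<alpha>}" for y
    using card_suborbits_eq[of \<alpha> y \<gamma>] that \<alpha> \<gamma> block_subset by auto
  then have "card (orbit (stabiliser G \<alpha>) \<gamma>) dvd card (B - {\<alpha>})"
    using dvd_card_if_card_orbits_eq[OF perm_group_stabiliser[OF perm_group]] finite_block closed
    by blast
  then show ?thesis using \<alpha> by simp
qed

lemma setwise_stabiliser_fixes_block:
  assumes \<alpha>: "\<alpha> \<in> B" and \<gamma>: "\<gamma> \<in> \<Delta> - B"
    and g: "g \<in> stabiliser G \<gamma>" "g ` B = B" and x: "x \<in> B"
  shows "g x = x"
proof -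
  define H where "H = {h \<in> stabiliser G \<gamma>. h ` B = B}"
  have H: "perm_group H \<Omega>"
    unfolding H_def by (rule perm_group_setwise_stabiliser[OF perm_group_stabiliser[OF perm_group]])
  have \<gamma>\<Omega>: "\<gamma> \<in> \<Omega>" using \<gamma> orbits_subset[OF perm_group \<Delta>] by auto
  have card_H: "card H = card (orbit H y) * t" if y: "y \<in> B" for y
  proof -
    have "h ` B = B" if "h \<in> G" "h y = y" for h
      using block_image_eq[OF block that(1) y] that(2) y by simp
    then have "stabiliser H y = stabiliser2 G y \<gamma>"
      by (auto simp: H_def stabiliser_def stabiliser2_def)
    moreover have "card (stabiliser2 G y \<gamma>) = t"
      using card_stabiliser2[of y \<gamma>] y \<gamma> \<gamma>\<Omega> block_subset by auto
    ultimately show ?thesis using orbit_stabiliser[OF H, of y] by simp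
  qed
  have t: "t > 0" using t_pos[of \<alpha> \<gamma>] \<alpha> \<gamma> \<gamma>\<Omega> block_subset by auto
  have card_B: "card B > 0" using \<alpha> finite_block by (auto simp: card_gt_0_iff)
  define w where "w = card (orbit H \<alpha>)"
  have card_orbit_H: "card (orbit H y) = w" if "y \<in> B" for y
    using card_H[OF that] card_H[OF \<alpha>] t by (simp add: w_def)
  have "w dvd card B"
    using dvd_card_if_card_orbits_eq[OF H finite_block _ card_orbit_H] by (auto simp: H_def)
  moreover have "w dvd card B - 1"
  proof -
    have "card H dvd card (stabiliser G \<alpha>)"
      using card_setwise_stabiliser_dvd[OF perm_group_stabiliser[OF perm_group], of \<gamma> B]
        card_stabiliser_eq_if_mem_orbits[OF perm_group \<Delta>, of \<gamma> \<alpha>] \<alpha> \<gamma> block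
      by (auto simp: H_def is_block_def)
    moreover have "card (stabiliser G \<alpha>) = card (orbit (stabiliser G \<alpha>) \<gamma>) * t"
      using card_stabiliser_eq_card_suborbit_mult \<alpha> \<gamma> \<gamma>\<Omega> block_subset by blast
    ultimately have "w * t dvd card (orbit (stabiliser G \<alpha>) \<gamma>) * t"
      using card_H[OF \<alpha>] by (simp add: w_def)
    then have "w dvd card (orbit (stabiliser G \<alpha>) \<gamma>)" using t by simp
    then show ?thesis
      using card_suborbit_dvd_card_block[OF \<alpha>, of \<gamma>] \<alpha> \<gamma> \<gamma>\<Omega> dvd_trans by blast
  qed
  ultimately have "w dvd card B - (card B - 1)" by (rule dvd_diff_nat)
  moreover have "card B - (card B - 1) = 1" using card_B by linarith
  ultimately have "card (orbit H x) = 1" using card_orbit_H[OF x] by simp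
  then obtain z where z: "orbit H x = {z}" by (rule card_1_singletonE)
  have "g x \<in> orbit H x" using g by (auto simp: H_def orbit_def)
  then show ?thesis using mem_orbit_self[OF H, of x] z by simp
qed

lemma stabiliser2_fixes_block:
  assumes x: "x \<in> B" and c: "c \<in> \<Delta> - B" and g: "g \<in> stabiliser2 G x c" and y: "y \<in> B"
  shows "g y = y"
proof (rule setwise_stabiliser_fixes_block[OF x c _ _ y])
  show "g \<in> stabiliser G c" using g by (simp add: stabiliser_def stabiliser2_def)
  show "g ` B = B" using g block_image_eq[OF block _ x] x by (simp add: stabiliser2_def)
qed

lemma stabiliser2_fixes_orbit:
  assumes a: "a \<in> B" "a' \<in> B" "a \<noteq> a'" and proper: "B \<noteq> \<Delta>"
    and g: "g \<in> stabiliser2 G a a'" and z: "z \<in> \<Delta>"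
  shows "g z = z"
proof -
  have B\<Delta>: "B \<subseteq> \<Delta>" using block by (simp add: is_block_def)
  have \<Delta>\<Omega>: "\<Delta> \<subseteq> \<Omega>" by (rule orbits_subset[OF perm_group \<Delta>])
  have eq: "stabiliser2 G a c = stabiliser2 G a a'" if c: "c \<in> \<Delta> - B" for c
  proof (rule card_subset_eq)
    show "finite (stabiliser2 G a a')"
      by (rule perm_group_finite[OF perm_group_stabiliser2[OF perm_group]])
    show "stabiliser2 G a c \<subseteq> stabiliser2 G a a'"
      using stabiliser2_fixes_block[OF a(1) c _ a(2)] by (auto simp: stabiliser2_def)
    show "card (stabiliser2 G a c) = card (stabiliser2 G a a')"
      using card_stabiliser2 a c B\<Delta> \<Delta>\<Omega> by (metis DiffE subsetD)
  qed
  obtain c where c: "c \<in> \<Delta> - B" using B\<Delta> proper by blast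
  show ?thesis
  proof (cases "z \<in> B")
    case True
    then show ?thesis using stabiliser2_fixes_block[OF a(1) c _ True] g eq[OF c] by simp
  next
    case False
    then have "g \<in> stabiliser2 G a z" using g eq[of z] z by simp
    then show ?thesis by (simp add: stabiliser2_def)
  qed
qed

end

text \<open>Here \<open>stabiliser2 G x y\<close> is the kernel of the action on \<open>\<Delta>\<close>.\<close>

context
  fixes \<Delta> x y
  assumes \<Delta>: "\<Delta> \<in> orbits G \<Omega>" and x: "x \<in> \<Delta>" and y: "y \<in> \<Delta>" and "x \<noteq> y"
    and fixes_orbit: "\<And>k z. k \<in> stabiliser2 G x y \<Longrightarrow> z \<in> \<Delta> \<Longrightarrow> k z = z"
begin

lemma stabiliser2_eq_on_orbit:
  assumes "u \<in> \<Delta>" "v \<in> \<Delta>" "u \<noteq> v"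
  shows "stabiliser2 G u v = stabiliser2 G x y"
proof (rule card_subset_eq[symmetric])
  have \<Delta>\<Omega>: "\<Delta> \<subseteq> \<Omega>" by (rule orbits_subset[OF perm_group \<Delta>])
  show "finite (stabiliser2 G u v)"
    by (rule perm_group_finite[OF perm_group_stabiliser2[OF perm_group]])
  show "stabiliser2 G x y \<subseteq> stabiliser2 G u v"
  proof
    fix k assume k: "k \<in> stabiliser2 G x y"
    then have "k u = u" "k v = v" using fixes_orbit[OF k] assms by simp_all
    then show "k \<in> stabiliser2 G u v" using k by (simp add: stabiliser2_def)
  qed
  show "card (stabiliser2 G x y) = card (stabiliser2 G u v)"
    using card_stabiliser2[of x y] card_stabiliser2[of u v] assms x y \<open>x \<noteq> y\<close> \<Delta>\<Omega>
    by (simp add: subsetD)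
qed

lemma conj_mem_stabiliser2:
  assumes g: "g \<in> G" and k: "k \<in> stabiliser2 G x y"
  shows "g \<circ> k \<circ> inv g \<in> stabiliser2 G x y"
proof -
  have "(g \<circ> k \<circ> inv g) z = z" if "z \<in> \<Delta>" for z
  proof -
    have "inv g z \<in> \<Delta>" using orbits_closed[OF perm_group \<Delta> perm_group_inv[OF perm_group g] that] .
    then show ?thesis using fixes_orbit[OF k] perm_group_apply_inv[OF perm_group g] by simp
  qed
  moreover have "g \<circ> k \<circ> inv g \<in> G"
    using k perm_group_comp[OF perm_group] perm_group_inv[OF perm_group g] g
    by (simp add: stabiliser2_def)
  ultimately show ?thesis using x y by (simp add: stabiliser2_def)
qed

lemma card_stabiliser_le_card_orbit_mult:
  assumes k: "k \<in> stabiliser2 G x y" and b: "k b \<noteq> b"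
  shows "card (stabiliser G b) \<le> (card (orbit (stabiliser2 G x y) b) - 1) * t"
proof -
  let ?K = "stabiliser2 G x y"
  have K: "perm_group ?K \<Omega>" by (rule perm_group_stabiliser2[OF perm_group])
  have kG: "k \<in> G" using k by (simp add: stabiliser2_def)
  have k_perm: "k permutes \<Omega>" by (rule perm_group_permutes[OF perm_group kG])
  have b\<Omega>: "b \<in> \<Omega>" using b permutes_not_in[OF k_perm, of b] by auto
  have kb\<Omega>: "k b \<in> \<Omega>" using permutes_in_image[OF k_perm] b\<Omega> by simp
  have sub: "orbit (stabiliser G b) (k b) \<subseteq> orbit ?K b - {b}"
  proof
    fix z assume "z \<in> orbit (stabiliser G b) (k b)"
    then obtain g where g: "g \<in> G" "g b = b" "z = g (k b)" by (auto simp: orbit_def stabiliser_def)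
    have "inv g b = b" using perm_group_inv_apply[OF perm_group g(1), of b] g(2) by simp
    have "z \<in> orbit ?K b" unfolding orbit_def
      by (rule rev_image_eqI[OF conj_mem_stabiliser2[OF g(1) k]]) (simp add: g(3) \<open>inv g b = b\<close>)
    moreover have "z \<noteq> b"
      using b g inj_eq[OF perm_group_inj[OF perm_group g(1)], of "k b" b] by simp
    ultimately show "z \<in> orbit ?K b - {b}" by simp
  qed
  have fin: "finite (orbit ?K b)" using perm_group_finite[OF K] by (simp add: orbit_def)
  have "card (orbit (stabiliser G b) (k b)) \<le> card (orbit ?K b - {b})"
    by (rule card_mono[OF _ sub]) (simp add: fin)
  also have "\<dots> = card (orbit ?K b) - 1" using fin mem_orbit_self[OF K, of b] by simp
  finally have "card (orbit (stabiliser G b) (k b)) * t \<le> (card (orbit ?K b) - 1) * t"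
    by (rule mult_right_mono) simp
  then show ?thesis
    using card_stabiliser_eq_card_suborbit_mult[OF b\<Omega> kb\<Omega> b[symmetric]] by simp
qed

lemma card_stabiliser_outside_orbit_ge:
  assumes b: "b \<in> \<Omega> - \<Delta>"
  defines "Q \<equiv> stabiliser (stabiliser2 G x y) b"
  shows "card Q + card \<Delta> * (t - card Q) \<le> card (stabiliser G b)"
proof -
  define A where "A u = stabiliser2 G u b - Q" for u
  have \<Delta>\<Omega>: "\<Delta> \<subseteq> \<Omega>" by (rule orbits_subset[OF perm_group \<Delta>])
  have fin_\<Delta>: "finite \<Delta>" using finite_subset[OF \<Delta>\<Omega>] perm_group by (simp add: perm_group_def)
  have fin_S2: "finite (stabiliser2 G u v)" for u v
    by (rule perm_group_finite[OF perm_group_stabiliser2[OF perm_group]])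
  have fin_Q: "finite Q" using fin_S2[of x y] by (simp add: Q_def stabiliser_def)
  have Q_sub: "Q \<subseteq> stabiliser2 G u b" if u: "u \<in> \<Delta>" for u
  proof
    fix k assume "k \<in> Q"
    then have k: "k \<in> stabiliser2 G x y" "k b = b" by (simp_all add: Q_def stabiliser_def)
    then show "k \<in> stabiliser2 G u b" using fixes_orbit[OF k(1) u] by (simp add: stabiliser2_def)
  qed
  have card_A: "card (A u) = t - card Q" if u: "u \<in> \<Delta>" for u
    using card_Diff_subset[OF fin_Q Q_sub[OF u]] card_stabiliser2[of u b] u b \<Delta>\<Omega>
    by (auto simp: A_def)
  have disjoint: "A u \<inter> A v = {}" if "u \<in> \<Delta>" "v \<in> \<Delta>" "u \<noteq> v" for u v
  proof -
    have "k \<in> Q" if "k \<in> stabiliser2 G u b" "k \<in> stabiliser2 G v b" for k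
    proof -
      have "k \<in> stabiliser2 G u v" using that by (simp add: stabiliser2_def)
      then have "k \<in> stabiliser2 G x y"
        using stabiliser2_eq_on_orbit[OF \<open>u \<in> \<Delta>\<close> \<open>v \<in> \<Delta>\<close> \<open>u \<noteq> v\<close>] by simp
      then show ?thesis using that by (simp add: Q_def stabiliser_def stabiliser2_def)
    qed
    then show ?thesis by (auto simp: A_def)
  qed
  have "card (\<Union>u\<in>\<Delta>. A u) = (\<Sum>u\<in>\<Delta>. card (A u))"
    by (rule card_UN_disjoint) (use fin_\<Delta> fin_S2 disjoint in \<open>auto simp: A_def\<close>)
  also have "\<dots> = card \<Delta> * (t - card Q)" using card_A by simp
  finally have card_UN: "card (\<Union>u\<in>\<Delta>. A u) = card \<Delta> * (t - card Q)" .
  have "card (Q \<union> (\<Union>u\<in>\<Delta>. A u)) = card Q + card (\<Union>u\<in>\<Delta>. A u)"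
    by (rule card_Un_disjoint[OF fin_Q]) (use fin_\<Delta> fin_S2 in \<open>auto simp: A_def\<close>)
  then have "card Q + card \<Delta> * (t - card Q) = card (Q \<union> (\<Union>u\<in>\<Delta>. A u))"
    using card_UN by simp
  also have "\<dots> \<le> card (stabiliser G b)"
  proof (rule card_mono)
    show "finite (stabiliser G b)"
      by (rule perm_group_finite[OF perm_group_stabiliser[OF perm_group]])
    show "Q \<union> (\<Union>u\<in>\<Delta>. A u) \<subseteq> stabiliser G b"
      by (auto simp: A_def Q_def stabiliser_def stabiliser2_def)
  qed
  finally show ?thesis .
qed

lemma card_orbit_stabiliser2_le:
  assumes b: "b \<in> \<Omega> - \<Delta>"
  shows "card (orbit (stabiliser2 G x y) b) \<le> card \<Delta>"
proof -
  have \<Delta>\<Omega>: "\<Delta> \<subseteq> \<Omega>" by (rule orbits_subset[OF perm_group \<Delta>])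
  have fin_\<Delta>: "finite \<Delta>" using finite_subset[OF \<Delta>\<Omega>] perm_group by (simp add: perm_group_def)
  have G_x: "perm_group (stabiliser G x) \<Omega>" by (rule perm_group_stabiliser[OF perm_group])
  have "orbit (stabiliser2 G x y) b \<subseteq> orbit (stabiliser G x) b"
    by (auto simp: orbit_def stabiliser_def stabiliser2_def)
  then have "card (orbit (stabiliser2 G x y) b) \<le> card (orbit (stabiliser G x) b)"
    using perm_group_finite[OF G_x] by (intro card_mono) (simp_all add: orbit_def)
  also have "\<dots> = card (orbit (stabiliser G x) y)"
    using card_suborbits_eq[of x b y] b x y \<open>x \<noteq> y\<close> \<Delta>\<Omega> by auto
  also have "\<dots> \<le> card \<Delta>"
  proof (rule card_mono[OF fin_\<Delta>], rule orbit_subset[OF _ y])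
    show "g z \<in> \<Delta>" if "g \<in> stabiliser G x" "z \<in> \<Delta>" for g z
      using orbits_closed[OF perm_group \<Delta> _ that(2)] that(1) by (simp add: stabiliser_def)
  qed
  finally show ?thesis .
qed

lemma t_le_1_if_stabiliser2_fixes_orbit: "t \<le> 1"
proof (rule ccontr)
  assume "\<not> t \<le> 1"
  let ?K = "stabiliser2 G x y"
  have K: "perm_group ?K \<Omega>" by (rule perm_group_stabiliser2[OF perm_group])
  have \<Delta>\<Omega>: "\<Delta> \<subseteq> \<Omega>" by (rule orbits_subset[OF perm_group \<Delta>])
  have card_K: "card ?K = t" using card_stabiliser2 x y \<open>x \<noteq> y\<close> \<Delta>\<Omega> by (simp add: subsetD)
  have "id \<in> ?K" using perm_group by (simp add: perm_group_def stabiliser2_def)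
  moreover have "\<not> (\<forall>k1\<in>?K. \<forall>k2\<in>?K. k1 = k2)"
    using \<open>\<not> t \<le> 1\<close> card_le_Suc0_iff_eq[OF perm_group_finite[OF K]] card_K by simp
  ultimately obtain k where k: "k \<in> ?K" "k \<noteq> id" by metis
  then obtain b where kb: "k b \<noteq> b" by (auto simp: fun_eq_iff)
  have b: "b \<in> \<Omega> - \<Delta>"
  proof
    have "k \<in> G" using k by (simp add: stabiliser2_def)
    then show "b \<in> \<Omega>"
      using kb permutes_not_in[OF perm_group_permutes[OF perm_group \<open>k \<in> G\<close>], of b] by auto
    show "b \<notin> \<Delta>" using kb fixes_orbit[OF k(1), of b] by auto
  qed
  define s where "s = card (orbit ?K b)"
  define q where "q = card (stabiliser ?K b)"
  have t: "t = s * q" using orbit_stabiliser[OF K, of b] card_K by (simp add: s_def q_def)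
  have "id \<in> stabiliser ?K b" using \<open>id \<in> ?K\<close> by (simp add: stabiliser_def)
  then have "q > 0"
    using perm_group_finite[OF perm_group_stabiliser[OF K]] by (auto simp: q_def card_gt_0_iff)
  have "q + (s - 1) * t = q + s * (t - q)"
    using t by (simp add: diff_mult_distrib diff_mult_distrib2)
  also have "\<dots> \<le> q + card \<Delta> * (t - q)"
    using card_orbit_stabiliser2_le[OF b] by (simp add: s_def)
  also have "\<dots> \<le> card (stabiliser G b)"
    using card_stabiliser_outside_orbit_ge[OF b] by (simp add: q_def)
  also have "\<dots> \<le> (s - 1) * t"
    using card_stabiliser_le_card_orbit_mult[OF k(1) kb] by (simp add: s_def)
  finally show False using \<open>q > 0\<close> by simp
qed

end

lemma primitive_on_orbits:
  assumes "t > 1" and \<Delta>: "\<Delta> \<in> orbits G \<Omega>"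
  shows "primitive_on G \<Delta>"
  unfolding primitive_on_def
proof (intro conjI allI impI)
  show "transitive_on G \<Delta>" by (rule transitive_on_orbits[OF perm_group \<Delta>])
  fix B assume block: "is_block G \<Delta> B"
  show "card B \<le> 1 \<or> B = \<Delta>"
  proof (rule ccontr)
    assume "\<not> (card B \<le> 1 \<or> B = \<Delta>)"
    then obtain a a' where a: "a \<in> B" "a' \<in> B" "a \<noteq> a'" and proper: "B \<noteq> \<Delta>"
      using card_le_Suc0_iff_eq[OF finite_block[OF \<Delta> block]] by auto
    have "a \<in> \<Delta>" "a' \<in> \<Delta>" using a block by (auto simp: is_block_def)
    with a have "t \<le> 1"
      using t_le_1_if_stabiliser2_fixes_orbit stabiliser2_fixes_orbit[OF \<Delta> block a proper] \<Delta>
      by blast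
    with \<open>t > 1\<close> show False by simp
  qed
qed

end

theorem mainTheorem3:
  fixes G :: "('a \<Rightarrow> 'a) set" and \<Omega> :: "'a set"
  assumes "perm_group G \<Omega>"
    and "quasi_transitive G \<Omega>"
    and "card (orbits G \<Omega>) > 1"
  shows "\<forall>\<Delta> \<in> orbits G \<Omega>. primitive_on G \<Delta> \<and> three_halves_transitive_on G \<Delta>"
proof -
  obtain t where "t > 1"
    and "\<And>a b. a \<in> \<Omega> \<Longrightarrow> b \<in> \<Omega> \<Longrightarrow> a \<noteq> b \<Longrightarrow> card (stabiliser2 G a b) = t"
    using assms(2) unfolding quasi_transitive_def by blast
  then interpret uniform_two_point_stabilisers G \<Omega> t
    using assms(1) by unfold_locales
  show ?thesis
    using primitive_on_orbits[OF \<open>t > 1\<close>] three_halves_transitive_on_orbits by blast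
qed

end
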